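(* Let $C\subseteq\mathbb{F}_2^n$ be a code. Then (1) $\displaystyle \mathrm{PUD}(C)\le 1-\frac{1}{|C|}\sum_{j=0}^n W^{\mathrm{H}}_j(C)\sum_{i=0}^n(1-q)^i(1-p)^{n-i}\sum_{s\in\mathcal S\left(\frac{\delta(C)+(\gamma-1)(i-j)}{2}\right)}\left(\frac{q}{1-p}\right)^s\lambda(i,j,s)$; (2) $\displaystyle \mathrm{PUD}(C)\le 1-\frac{1}{|C|}\sum_{j=0}^n W^{\mathrm{H}}_j(C)\sum_{i=0}^n(1-q)^i(1-p)^{n-i}\sum_{s\in\mathcal S\left(\frac{\hat\delta(C)+i(\gamma-1)}{2}\right)}\left(\frac{q}{1-p}\right)^s\lambda(i,j,s)$.
   Context: Let $n\ge2$ and fix reals $0<p\le q<1/2$. Let $\mathbb{P}^n(y\mid x)=\prod_{i=1}^n\mathbb{P}(y_i\mid x_i)$ where $\mathbb{P}(1\mid0)=p$, $\mathbb{P}(0\mid0)=1-p$, $\mathbb{P}(0\mid1)=q$, $\mathbb{P}(1\mid1)=1-q$. Let $\gamma:=\log_{q/(1-p)}\left(\frac{p}{1-q}\right)$. For $x\in\mathbb{F}_2^n$, $\omega^{\mathrm{H}}(x)=|\{i:x_i=1\}|$; for $a,b\in\{0,1\}$, $d_{ab}(y,x)=|\{i: y_i=a,\ x_i=b\}|$. Discrepancy: $\delta(y,x):=\gamma\,d_{10}(y,x)+d_{01}(y,x)$; symmetric discrepancy: $\hat\delta(y,x):=\delta(y,x)-\omega^{\mathrm{H}}(y)(\gamma-1)$.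 A code is $C\subseteq\mathbb{F}_2^n$ with $|C|\ge2$; $\delta(C)=\min\{\delta(x,x'):x,x'\in C,\ x\ne x'\}$, $\hat\delta(C)=\min\{\hat\delta(x,x'):x,x'\in C,\ x\ne x'\}$. $W^{\mathrm{H}}_j(C)$ is the number of codewords of Hamming weight $j$. The maximum likelihood decoder $D_C$ sends $y$ to $x$ if $x$ is the unique codeword maximizing $\mathbb{P}^n(y\mid x)$ and to a failure symbol $\mathbf f\notin\mathbb{F}_2^n$ otherwise; $\mathrm{PUD}(C):=\frac{1}{|C|}\sum_{x\in C}\sum_{y\in\mathbb{F}_2^n,\ D_C(y)\ne x}\mathbb{P}^n(y\mid x)$. Let $\mathcal S:=\{a+\gamma b:a,b\in\mathbb N\}$ and $\mathcal S(h):=\{s\in\mathcal S: 0\le s<h\}$. For real $a,b$, $\mathrm{Bin}(a,b)=\binom ab$ if $a,b\in\mathbb N$ and $0$ otherwise, and $\lambda(i,j,s):=\mathrm{Bin}\!\left(j,\frac{i\gamma-s+j}{\gamma+1}\right)\mathrm{Bin}\!\left(n-j,\frac{s-j+i}{\gamma+1}\right)$ (this equals the number of $y$ of weight $i$ with $\delta(y,x)=s$ for any fixed $x$ of weight $j$). *)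

theory Defs
  imports Complex_Main
begin

text \<open>Binary words of length n are represented as bool lists (True = 1).\<close>

definition F2n :: "nat \<Rightarrow> bool list set" where
  "F2n n = {x. length x = n}"

text \<open>Single-letter channel: chan p q a b = P(output a | input b).\<close>
definition chan :: "real \<Rightarrow> real \<Rightarrow> bool \<Rightarrow> bool \<Rightarrow> real" where
  "chan p q a b = (if b then (if a then 1 - q else q) else (if a then p else 1 - p))"

definition Pn :: "real \<Rightarrow> real \<Rightarrow> bool list \<Rightarrow> bool list \<Rightarrow> real" where
  "Pn p q y x = (\<Prod>i<length x. chan p q (y ! i) (x ! i))"

definition gam :: "real \<Rightarrow> real \<Rightarrow> real" where
  "gam p q = log (q / (1 - p)) (p / (1 - q))"

definition wtH :: "bool list \<Rightarrow> nat" where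
  "wtH x = card {i. i < length x \<and> x ! i}"

definition dab :: "bool \<Rightarrow> bool \<Rightarrow> bool list \<Rightarrow> bool list \<Rightarrow> nat" where
  "dab a b y x = card {i. i < length x \<and> y ! i = a \<and> x ! i = b}"

definition disc :: "real \<Rightarrow> real \<Rightarrow> bool list \<Rightarrow> bool list \<Rightarrow> real" where
  "disc p q y x = gam p q * real (dab True False y x) + real (dab False True y x)"

definition sdisc :: "real \<Rightarrow> real \<Rightarrow> bool list \<Rightarrow> bool list \<Rightarrow> real" where
  "sdisc p q y x = disc p q y x - real (wtH y) * (gam p q - 1)"

definition code_disc :: "real \<Rightarrow> real \<Rightarrow> bool list set \<Rightarrow> real" where
  "code_disc p q C = Min {disc p q x x' | x x'. x \<in> C \<and> x' \<in> C \<and> x \<noteq> x'}"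

definition code_sdisc :: "real \<Rightarrow> real \<Rightarrow> bool list set \<Rightarrow> real" where
  "code_sdisc p q C = Min {sdisc p q x x' | x x'. x \<in> C \<and> x' \<in> C \<and> x \<noteq> x'}"

definition WH :: "bool list set \<Rightarrow> nat \<Rightarrow> nat" where
  "WH C j = card {x \<in> C. wtH x = j}"

text \<open>ML decoder; None plays the role of the failure symbol f.\<close>
definition MLdec :: "real \<Rightarrow> real \<Rightarrow> bool list set \<Rightarrow> bool list \<Rightarrow> bool list option" where
  "MLdec p q C y =
     (if \<exists>x\<in>C. \<forall>x'\<in>C. x' \<noteq> x \<longrightarrow> Pn p q y x' < Pn p q y x
      then Some (THE x. x \<in> C \<and> (\<forall>x'\<in>C. x' \<noteq> x \<longrightarrow> Pn p q y x' < Pn p q y x))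
      else None)"

definition PUD :: "real \<Rightarrow> real \<Rightarrow> nat \<Rightarrow> bool list set \<Rightarrow> real" where
  "PUD p q n C = (1 / real (card C)) *
     (\<Sum>x\<in>C. \<Sum>y\<in>{y \<in> F2n n. MLdec p q C y \<noteq> Some x}. Pn p q y x)"

definition Sset :: "real \<Rightarrow> real \<Rightarrow> real \<Rightarrow> real set" where
  "Sset p q h = {s. (\<exists>a b :: nat. s = real a + gam p q * real b) \<and> 0 \<le> s \<and> s < h}"

definition Bin :: "real \<Rightarrow> real \<Rightarrow> real" where
  "Bin a b = (if a \<in> \<nat> \<and> b \<in> \<nat> then real (nat \<lfloor>a\<rfloor> choose nat \<lfloor>b\<rfloor>) else 0)"

definition lam :: "real \<Rightarrow> real \<Rightarrow> nat \<Rightarrow> nat \<Rightarrow> nat \<Rightarrow> real \<Rightarrow> real" where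
  "lam p q n i j s =
     Bin (real j) ((real i * gam p q - s + real j) / (gam p q + 1)) *
     Bin (real n - real j) ((s - real j + real i) / (gam p q + 1))"

end

theory Submission
  imports Defs
begin

(*
  With beta = q/(1-p) one has beta powr gamma = p/(1-q), so every channel letter is a power of beta
  times a factor that depends only on the output letter:
    P(y|x) = (1-q)^w(y) (1-p)^(n-w(y)) beta powr delta(y,x).
  As beta < 1, maximum likelihood decoding is minimum discrepancy decoding. Since gamma >= 1, delta
  satisfies the triangle inequality, and delta(y,x) = delta(x,y) + (gamma-1)(w(y)-w(x)); hence
  every y with 2 delta(y,x) < delta(C) + (gamma-1)(w(y)-w(x)), or with
  2 delta(y,x) < hat-delta(C) + (gamma-1) w(y), is decoded to x. The probability of correct
  decoding is therefore at least the channel mass of these y, and grouping them by weight i and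
  discrepancy s gives classes of exactly lambda(i,j,s) words.
*)

lemma card_subsets_parts:
  assumes "finite A" and "X \<subseteq> A"
  shows "card {T. T \<subseteq> A \<and> card (T - X) = u \<and> card (T \<inter> X) = v}
         = (card X choose v) * (card (A - X) choose u)"
proof -
  let ?S = "{T. T \<subseteq> A \<and> card (T - X) = u \<and> card (T \<inter> X) = v}"
  let ?P = "{V. V \<subseteq> X \<and> card V = v} \<times> {U. U \<subseteq> A - X \<and> card U = u}"
  have "bij_betw (\<lambda>T. (T \<inter> X, T - X)) ?S ?P"
  proof (rule bij_betw_byWitness[where f' = "\<lambda>(V, U). V \<union> U"])
    show "(\<lambda>(V, U). V \<union> U) ` ?P \<subseteq> ?S"
    proof
      fix T assume "T \<in> (\<lambda>(V, U). V \<union> U) ` ?P"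
      then obtain V U where "T = V \<union> U" "V \<subseteq> X" "card V = v" "U \<subseteq> A - X" "card U = u"
        by auto
      moreover have "(V \<union> U) \<inter> X = V" "(V \<union> U) - X = U"
        using \<open>V \<subseteq> X\<close> \<open>U \<subseteq> A - X\<close> by auto
      ultimately show "T \<in> ?S" using assms(2) by auto
    qed
  qed auto
  then have "card ?S = card ?P" by (rule bij_betw_same_card)
  also have "\<dots> = (card X choose v) * (card (A - X) choose u)"
    using assms finite_subset[OF assms(2)]
    by (simp add: card_cartesian_product n_subsets)
  finally show ?thesis .
qed

lemma card_Diff_triangle:
  assumes "finite X" and "finite Y"
  shows "card (X - Z) \<le> card (X - Y) + card (Y - Z)"
proof -
  have "card (X - Z) \<le> card ((X - Y) \<union> (Y - Z))"
    by (rule card_mono) (use assms in auto)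
  also have "\<dots> \<le> card (X - Y) + card (Y - Z)" by (rule card_Un_le)
  finally show ?thesis .
qed

lemma prod_if_mem_lessThan:
  fixes n :: nat
  assumes "T \<subseteq> {..<n}"
  shows "(\<Prod>i<n. if i \<in> T then a else b) = a ^ card T * b ^ (n - card T)"
proof -
  have "{..<n} \<inter> {i. i \<in> T} = T" "{..<n} \<inter> - {i. i \<in> T} = {..<n} - T" using assms by auto
  then show ?thesis
    using assms by (simp add: prod.If_cases card_Diff_subset finite_subset)
qed

lemma sum_if_mem_lessThan:
  fixes n :: nat
  assumes "T \<subseteq> {..<n}"
  shows "(\<Sum>i<n. if i \<in> T then c else 0) = c * real (card T)"
proof -
  have "(\<Sum>i<n. if i \<in> T then c else 0) = sum (\<lambda>_. c) {i \<in> {..<n}. i \<in> T}"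
    by (rule sum.inter_filter[symmetric]) simp
  also have "{i \<in> {..<n}. i \<in> T} = T" using assms by auto
  finally show ?thesis by (simp add: mult.commute)
qed

text \<open>With \<open>u, v, w\<close> the sizes of \<open>T - X\<close>, \<open>T \<inter> X\<close>, \<open>X - T\<close>, the weight of \<open>T\<close> is \<open>u + v\<close> and
  its discrepancy from \<open>X\<close> is \<open>g u + w\<close>; this linear system determines \<open>u\<close> and \<open>v\<close>.\<close>

lemma weight_disc_iff_parts:
  fixes g s i j u v w :: real
  assumes g: "g > -1" and j: "j = v + w"
  shows "(u + v = i \<and> g * u + w = s) \<longleftrightarrow>
         (u = (s - j + i) / (g + 1) \<and> v = (i * g - s + j) / (g + 1))"
proof -
  have g1: "g + 1 \<noteq> 0" using g by linarith
  have "(u + v = i \<and> g * u + w = s) \<longleftrightarrow>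
        ((g + 1) * u = s - j + i \<and> (g + 1) * v = i * g - s + j)"
  proof
    assume "u + v = i \<and> g * u + w = s"
    then show "(g + 1) * u = s - j + i \<and> (g + 1) * v = i * g - s + j"
      using j by (auto simp: algebra_simps)
  next
    assume r: "(g + 1) * u = s - j + i \<and> (g + 1) * v = i * g - s + j"
    then have "(g + 1) * (u + v) = (g + 1) * i" by (simp add: algebra_simps)
    then have "u + v = i" using g1 by simp
    with r j show "u + v = i \<and> g * u + w = s" by (simp add: algebra_simps)
  qed
  also have "\<dots> \<longleftrightarrow> (u = (s - j + i) / (g + 1) \<and> v = (i * g - s + j) / (g + 1))"
    using g1 by (simp add: eq_divide_eq mult.commute)
  finally show ?thesis .
qed

lemma card_subsets_weight_disc:
  fixes g s :: real
  assumes A: "finite A" and XA: "X \<subseteq> A" and g: "g > -1"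
  shows "real (card {T. T \<subseteq> A \<and> card T = i \<and>
                        g * real (card (T - X)) + real (card (X - T)) = s})
    = Bin (real (card X)) ((real i * g - s + real (card X)) / (g + 1)) *
      Bin (real (card A) - real (card X)) ((s - real (card X) + real i) / (g + 1))"
proof -
  define U where "U = (s - real (card X) + real i) / (g + 1)"
  define V where "V = (real i * g - s + real (card X)) / (g + 1)"
  let ?S = "{T. T \<subseteq> A \<and> card T = i \<and> g * real (card (T - X)) + real (card (X - T)) = s}"
  have X: "finite X" using A XA finite_subset by blast
  have parts: "?S = {T. T \<subseteq> A \<and> real (card (T - X)) = U \<and> real (card (T \<inter> X)) = V}"
  proof -
    have "(card T = i \<and> g * real (card (T - X)) + real (card (X - T)) = s) \<longleftrightarrow>
          (real (card (T - X)) = U \<and> real (card (T \<inter> X)) = V)" if "T \<subseteq> A" for T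
    proof -
      have "card T = card (T - X) + card (T \<inter> X)" "card X = card (T \<inter> X) + card (X - T)"
        using card_Int_Diff[OF finite_subset[OF that A], of X] card_Int_Diff[OF X, of T]
        by (simp_all add: Int_commute)
      then show ?thesis
        unfolding U_def V_def of_nat_eq_iff[where 'a = real, symmetric]
        using weight_disc_iff_parts[OF g, of "real (card X)" "real (card (T \<inter> X))"
            "real (card (X - T))" "real (card (T - X))" "real i" s]
        by simp
    qed
    then show ?thesis by blast
  qed
  show ?thesis
  proof (cases "U \<in> \<nat> \<and> V \<in> \<nat>")
    case True
    then obtain u v where uv: "U = real u" "V = real v" by (auto elim!: Nats_cases)
    have "card ?S = (card X choose v) * (card (A - X) choose u)"
      unfolding parts uv of_nat_eq_iff by (rule card_subsets_parts[OF A XA])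
    moreover have "real (card A) - real (card X) = real (card (A - X))"
      using card_mono[OF A XA] card_Diff_subset[OF X XA] by simp
    ultimately show ?thesis
      unfolding Bin_def U_def[symmetric] V_def[symmetric] uv by simp
  next
    case False
    then have empty: "?S = {}" unfolding parts by (auto simp del: of_nat_eq_iff)
    have "Bin (real (card X)) V = 0 \<or> Bin (real (card A) - real (card X)) U = 0"
      using False by (auto simp: Bin_def)
    then show ?thesis unfolding empty U_def[symmetric] V_def[symmetric] by auto
  qed
qed

definition supp :: "bool list \<Rightarrow> nat set" where
  "supp y = {i. i < length y \<and> y ! i}"

lemma supp_subset: "supp y \<subseteq> {..<length y}"
  by (auto simp: supp_def)

lemma finite_supp: "finite (supp y)"
  using supp_subset finite_subset by blast

lemma mem_supp_iff: "i < length y \<Longrightarrow> i \<in> supp y \<longleftrightarrow> y ! i"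
  by (simp add: supp_def)

lemma bij_betw_supp_F2n: "bij_betw supp (F2n n) (Pow {..<n})"
proof (rule bij_betw_byWitness[where f' = "\<lambda>T. map (\<lambda>i. i \<in> T) [0..<n]"])
  show "\<forall>y\<in>F2n n. map (\<lambda>i. i \<in> supp y) [0..<n] = y"
    by (auto simp: F2n_def mem_supp_iff intro: nth_equalityI)
qed (use supp_subset in \<open>auto simp: F2n_def supp_def\<close>)

lemma finite_F2n: "finite (F2n n)"
  using bij_betw_finite[OF bij_betw_supp_F2n] by simp

lemma card_F2n_supp_filter:
  "card {y \<in> F2n n. Q (supp y)} = card {T. T \<subseteq> {..<n} \<and> Q T}"
proof -
  have "bij_betw supp {y \<in> F2n n. Q (supp y)} {T \<in> Pow {..<n}. Q T}"
    using bij_betw_supp_F2n by (rule bij_betw_Collect) simp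
  then show ?thesis by (simp add: bij_betw_same_card Pow_def)
qed

lemma wtH_eq_card_supp: "wtH y = card (supp y)"
  by (simp add: wtH_def supp_def)

lemma wtH_le: "y \<in> F2n n \<Longrightarrow> wtH y \<le> n"
  using card_mono[OF _ supp_subset, of y] by (simp add: wtH_eq_card_supp F2n_def)

lemma disc_eq_card_supp:
  assumes "length y = length x"
  shows "disc p q y x = gam p q * real (card (supp y - supp x)) + real (card (supp x - supp y))"
proof -
  have "dab True False y x = card (supp y - supp x)" "dab False True y x = card (supp x - supp y)"
    unfolding dab_def supp_def using assms by (auto intro!: arg_cong[where f = card])
  then show ?thesis by (simp add: disc_def)
qed

lemma card_F2n_weight_disc:
  assumes "length x = n" and "gam p q > -1"
  shows "real (card {y \<in> F2n n. wtH y = i \<and> disc p q y x = s}) = lam p q n i (wtH x) s"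
proof -
  let ?Q = "\<lambda>T. card T = i \<and> gam p q * real (card (T - supp x)) + real (card (supp x - T)) = s"
  have "{y \<in> F2n n. wtH y = i \<and> disc p q y x = s} = {y \<in> F2n n. ?Q (supp y)}"
    using assms(1) by (auto simp: F2n_def wtH_eq_card_supp disc_eq_card_supp)
  then show ?thesis
    using card_subsets_weight_disc[of "{..<n}" "supp x" "gam p q" i s] supp_subset[of x] assms
    by (simp add: card_F2n_supp_filter[of n ?Q] lam_def wtH_eq_card_supp conj_assoc)
qed

lemma disc_triangle:
  assumes "gam p q \<ge> 0" and "length y = length x" and "length z = length x"
  shows "disc p q x z \<le> disc p q x y + disc p q y z"
proof -
  have "card (supp x - supp z) \<le> card (supp x - supp y) + card (supp y - supp z)"
    "card (supp z - supp x) \<le> card (supp z - supp y) + card (supp y - supp x)"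
    by (simp_all add: card_Diff_triangle finite_supp)
  then have "real (card (supp x - supp z)) \<le> real (card (supp x - supp y)) + real (card (supp y - supp z))"
    "real (card (supp z - supp x)) \<le> real (card (supp z - supp y)) + real (card (supp y - supp x))"
    by linarith+
  moreover have "gam p q * real (card (supp x - supp z)) \<le>
      gam p q * (real (card (supp x - supp y)) + real (card (supp y - supp z)))"
    using assms(1) calculation(1) by (intro mult_left_mono) simp_all
  ultimately show ?thesis
    using assms(2,3) by (simp add: disc_eq_card_supp algebra_simps)
qed

lemma disc_commute:
  assumes "length y = length x"
  shows "disc p q y x = disc p q x y + (gam p q - 1) * (real (wtH y) - real (wtH x))"
proof -
  have "card (supp y) = card (supp y \<inter> supp x) + card (supp y - supp x)"
    "card (supp x) = card (supp y \<inter> supp x) + card (supp x - supp y)"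
    using card_Int_Diff[OF finite_supp, of y "supp x"] card_Int_Diff[OF finite_supp, of x "supp y"]
    by (simp_all add: Int_commute)
  with assms show ?thesis by (simp add: disc_eq_card_supp wtH_eq_card_supp algebra_simps)
qed

lemma
  fixes p q :: real
  assumes "0 < p" "p \<le> q" "q < 1/2"
  shows beta_pos: "0 < q / (1 - p)" and beta_less_1: "q / (1 - p) < 1"
    and gam_ge_1: "gam p q \<ge> 1"
proof -
  show "0 < q / (1 - p)" "q / (1 - p) < 1" using assms by simp_all
  have "q * (1 - q) - p * (1 - p) = (q - p) * (1 - q - p)" by (simp add: algebra_simps)
  moreover have "(q - p) * (1 - q - p) \<ge> 0" using assms by simp
  ultimately have "p * (1 - p) \<le> q * (1 - q)" by linarith
  then have "ln (p / (1 - q)) \<le> ln (q / (1 - p))"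
    using assms by (simp add: divide_simps mult.commute)
  moreover have "ln (q / (1 - p)) < 0" using assms by simp
  ultimately show "gam p q \<ge> 1"
    by (simp add: gam_def log_def le_divide_eq)
qed

lemma chan_eq_powr:
  fixes p q :: real
  assumes "0 < p" "p \<le> q" "q < 1/2"
  shows "chan p q a b = (if a then 1 - q else 1 - p) *
     (q / (1 - p)) powr ((if a \<and> \<not> b then gam p q else 0) + (if \<not> a \<and> b then 1 else 0))"
proof -
  have "(q / (1 - p)) powr gam p q = p / (1 - q)"
    unfolding gam_def using assms beta_less_1[OF assms] by simp
  then show ?thesis using assms by (cases a; cases b) (simp_all add: chan_def)
qed

lemma Pn_eq_powr_disc:
  fixes p q :: real
  assumes pq: "0 < p" "p \<le> q" "q < 1/2" and len: "length y = length x"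
  shows "Pn p q y x = (1 - q) ^ wtH y * (1 - p) ^ (length x - wtH y) *
                      (q / (1 - p)) powr disc p q y x"
proof -
  define n where "n = length x"
  define T where "T = supp y"
  define X where "X = supp x"
  have T: "T \<subseteq> {..<n}" and "T - X \<subseteq> {..<n}" "X - T \<subseteq> {..<n}"
    using supp_subset[of y] supp_subset[of x] len by (auto simp: T_def X_def n_def)
  have "Pn p q y x = (\<Prod>i<n. (if i \<in> T then 1 - q else 1 - p) *
          (q / (1 - p)) powr ((if i \<in> T - X then gam p q else 0) + (if i \<in> X - T then 1 else 0)))"
    unfolding Pn_def n_def using len
    by (intro prod.cong) (auto simp: chan_eq_powr[OF pq] mem_supp_iff T_def X_def)
  also have "\<dots> = (\<Prod>i<n. if i \<in> T then 1 - q else 1 - p) * (q / (1 - p)) powr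
          (\<Sum>i<n. (if i \<in> T - X then gam p q else 0) + (if i \<in> X - T then 1 else 0))"
    using pq by (simp add: prod.distrib powr_sum del: Diff_iff)
  also have "\<dots> = (\<Prod>i<n. if i \<in> T then 1 - q else 1 - p) * (q / (1 - p)) powr
          ((\<Sum>i<n. if i \<in> T - X then gam p q else 0) + (\<Sum>i<n. if i \<in> X - T then 1 else 0))"
    by (simp only: sum.distrib)
  also have "\<dots> = (1 - q) ^ wtH y * (1 - p) ^ (length x - wtH y) * (q / (1 - p)) powr disc p q y x"
    unfolding prod_if_mem_lessThan[OF T] sum_if_mem_lessThan[OF \<open>T - X \<subseteq> {..<n}\<close>]
      sum_if_mem_lessThan[OF \<open>X - T \<subseteq> {..<n}\<close>]
    using len by (simp add: disc_eq_card_supp wtH_eq_card_supp T_def X_def n_def)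
  finally show ?thesis .
qed

lemma Pn_nonneg:
  fixes p q :: real
  assumes "0 \<le> p" "p \<le> 1" "0 \<le> q" "q \<le> 1"
  shows "Pn p q y x \<ge> 0"
  unfolding Pn_def using assms by (intro prod_nonneg) (simp add: chan_def)

lemma sum_Pn_F2n:
  assumes "length x = n"
  shows "(\<Sum>y\<in>F2n n. Pn p q y x) = 1"
proof -
  define g where "g T = (\<Prod>i<n. if i \<in> T then chan p q True (x ! i) else chan p q False (x ! i))"
    for T
  have "(\<Sum>y\<in>F2n n. Pn p q y x) = (\<Sum>y\<in>F2n n. g (supp y))"
    unfolding Pn_def g_def using assms
    by (intro sum.cong prod.cong) (auto simp: F2n_def mem_supp_iff)
  also have "\<dots> = (\<Sum>T\<in>Pow {..<n}. g T)"
    by (rule sum.reindex_bij_betw[OF bij_betw_supp_F2n])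
  also have "\<dots> = (\<Sum>T\<in>Pow {..<n}. (\<Prod>i\<in>T. chan p q True (x ! i)) *
                                     (\<Prod>i\<in>{..<n} - T. chan p q False (x ! i)))"
    unfolding g_def by (intro sum.cong refl) (simp add: prod.If_cases Int_absorb2 Diff_eq Int_commute)
  also have "\<dots> = (\<Prod>i<n. chan p q True (x ! i) + chan p q False (x ! i))"
    by (rule prod_add[symmetric]) simp
  also have "\<dots> = 1" by (rule prod.neutral) (simp add: chan_def)
  finally show ?thesis .
qed

lemma MLdec_eq_Some_if_disc_less:
  fixes p q :: real
  assumes pq: "0 < p" "p \<le> q" "q < 1/2" and C: "C \<subseteq> F2n n" and x: "x \<in> C"
    and y: "y \<in> F2n n"
    and less: "\<And>x'. x' \<in> C \<Longrightarrow> x' \<noteq> x \<Longrightarrow> disc p q y x < disc p q y x'"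
  shows "MLdec p q C y = Some x"
proof -
  have Pn_less: "Pn p q y x' < Pn p q y x" if "x' \<in> C" "x' \<noteq> x" for x'
  proof -
    have "(q / (1 - p)) powr disc p q y x' < (q / (1 - p)) powr disc p q y x"
      using powr_less_mono'[OF beta_pos[OF pq] beta_less_1[OF pq] less[OF that]] .
    moreover have "length y = length x" "length x' = length x"
      using C x y that by (auto simp: F2n_def subset_iff)
    ultimately show ?thesis
      using pq by (simp add: Pn_eq_powr_disc[OF pq])
  qed
  then have "(THE x. x \<in> C \<and> (\<forall>x'\<in>C. x' \<noteq> x \<longrightarrow> Pn p q y x' < Pn p q y x)) = x"
    using x by (intro the_equality) (auto dest: less_asym)
  then show ?thesis unfolding MLdec_def using x Pn_less by auto
qed

lemma disc_less_if_twice_disc_less: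
  assumes "gam p q \<ge> 1" and "length y = length x" and "length x' = length x"
    and "2 * disc p q y x < disc p q x x' + (gam p q - 1) * (real (wtH y) - real (wtH x))"
  shows "disc p q y x < disc p q y x'"
  using disc_triangle[of p q y x x'] disc_commute[of y x p q] assms by simp

lemma finite_Sset:
  assumes "gam p q \<ge> 1"
  shows "finite (Sset p q h)"
proof -
  define N where "N = nat \<lceil>h\<rceil>"
  have "Sset p q h \<subseteq> (\<lambda>(a, b). real a + gam p q * real b) ` ({..N} \<times> {..N})"
  proof
    fix s assume "s \<in> Sset p q h"
    then obtain a b :: nat where s: "s = real a + gam p q * real b" "s < h"
      unfolding Sset_def by auto
    moreover have "real b \<le> gam p q * real b" using assms by (simp add: mult_le_cancel_right1)
    ultimately have "a \<le> N" "b \<le> N" unfolding N_def using assms by linarith+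
    with s show "s \<in> (\<lambda>(a, b). real a + gam p q * real b) ` ({..N} \<times> {..N})" by auto
  qed
  then show ?thesis by (rule finite_subset) simp
qed

lemma disc_mem_Sset:
  assumes "gam p q \<ge> 0" and "disc p q y x < h"
  shows "disc p q y x \<in> Sset p q h"
  using assms unfolding Sset_def disc_def by (auto intro!: exI add.commute)

lemma sum_powr_disc_weight:
  assumes g: "gam p q \<ge> 1" and len: "length x = n"
  shows "(\<Sum>y\<in>{y \<in> F2n n. wtH y = i \<and> disc p q y x < r}. b powr disc p q y x) =
         (\<Sum>s\<in>Sset p q r. b powr s * lam p q n i (wtH x) s)"
proof -
  let ?Y = "{y \<in> F2n n. wtH y = i \<and> disc p q y x < r}"
  have "(\<Sum>y\<in>?Y. b powr disc p q y x) =
        (\<Sum>s\<in>Sset p q r. \<Sum>y\<in>{y \<in> ?Y. disc p q y x = s}. b powr disc p q y x)"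
    by (rule sum.group[symmetric]) (use finite_F2n finite_Sset[OF g] disc_mem_Sset g in auto)
  also have "\<dots> = (\<Sum>s\<in>Sset p q r. b powr s * real (card {y \<in> F2n n. wtH y = i \<and> disc p q y x = s}))"
  proof (intro sum.cong refl)
    fix s assume "s \<in> Sset p q r"
    then have "{y \<in> ?Y. disc p q y x = s} = {y \<in> F2n n. wtH y = i \<and> disc p q y x = s}"
      by (auto simp: Sset_def)
    then show "(\<Sum>y\<in>{y \<in> ?Y. disc p q y x = s}. b powr disc p q y x) =
               b powr s * real (card {y \<in> F2n n. wtH y = i \<and> disc p q y x = s})"
      by simp
  qed
  also have "\<dots> = (\<Sum>s\<in>Sset p q r. b powr s * lam p q n i (wtH x) s)"
    using card_F2n_weight_disc[OF len] g by simp
  finally show ?thesis .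
qed

lemma sum_Pn_disc_less:
  fixes p q :: real and h :: "nat \<Rightarrow> real"
  assumes pq: "0 < p" "p \<le> q" "q < 1/2" and len: "length x = n"
  shows "(\<Sum>y\<in>{y \<in> F2n n. disc p q y x < h (wtH y)}. Pn p q y x) =
    (\<Sum>i\<le>n. (1 - q) ^ i * (1 - p) ^ (n - i) *
       (\<Sum>s\<in>Sset p q (h i). (q / (1 - p)) powr s * lam p q n i (wtH x) s))"
proof -
  let ?Y = "\<lambda>i. {y \<in> F2n n. wtH y = i \<and> disc p q y x < h i}"
  have "(\<Sum>y\<in>{y \<in> F2n n. disc p q y x < h (wtH y)}. Pn p q y x) = (\<Sum>i\<le>n. \<Sum>y\<in>?Y i. Pn p q y x)"
    by (subst sum.group[symmetric, where g = wtH and T = "{..n}"])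
       (auto simp: finite_F2n wtH_le intro!: sum.cong)
  also have "\<dots> = (\<Sum>i\<le>n. \<Sum>y\<in>?Y i. (1 - q) ^ i * (1 - p) ^ (n - i) * (q / (1 - p)) powr disc p q y x)"
    using len by (intro sum.cong refl) (auto simp: Pn_eq_powr_disc[OF pq] F2n_def)
  also have "\<dots> = (\<Sum>i\<le>n. (1 - q) ^ i * (1 - p) ^ (n - i) *
       (\<Sum>s\<in>Sset p q (h i). (q / (1 - p)) powr s * lam p q n i (wtH x) s))"
    by (simp add: sum_distrib_left[symmetric] sum_powr_disc_weight[OF gam_ge_1[OF pq] len])
  finally show ?thesis .
qed

lemma sum_Pn_not_decoded_le:
  fixes p q :: real
  assumes pq: "0 < p" "p \<le> q" "q < 1/2" and len: "length x = n"
    and dec: "\<And>y. y \<in> F2n n \<Longrightarrow> disc p q y x < h (wtH y) \<Longrightarrow> MLdec p q C y = Some x"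
  shows "(\<Sum>y\<in>{y \<in> F2n n. MLdec p q C y \<noteq> Some x}. Pn p q y x)
         \<le> 1 - (\<Sum>y\<in>{y \<in> F2n n. disc p q y x < h (wtH y)}. Pn p q y x)"
proof -
  let ?D = "{y \<in> F2n n. MLdec p q C y = Some x}"
  have "{y \<in> F2n n. MLdec p q C y \<noteq> Some x} = F2n n - ?D" by auto
  then have "(\<Sum>y\<in>{y \<in> F2n n. MLdec p q C y \<noteq> Some x}. Pn p q y x) = 1 - (\<Sum>y\<in>?D. Pn p q y x)"
    by (simp add: sum_diff finite_F2n sum_Pn_F2n[OF len])
  moreover have "(\<Sum>y\<in>{y \<in> F2n n. disc p q y x < h (wtH y)}. Pn p q y x) \<le> (\<Sum>y\<in>?D. Pn p q y x)"
    using pq dec by (intro sum_mono2) (auto simp: finite_F2n Pn_nonneg)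
  ultimately show ?thesis by linarith
qed

lemma PUD_le_of_decoding_radius:
  fixes p q :: real and h :: "nat \<Rightarrow> nat \<Rightarrow> real"
  assumes pq: "0 < p" "p \<le> q" "q < 1/2" and C: "C \<subseteq> F2n n" "C \<noteq> {}"
    and dec: "\<And>x y. x \<in> C \<Longrightarrow> y \<in> F2n n \<Longrightarrow> disc p q y x < h (wtH y) (wtH x) \<Longrightarrow>
                 MLdec p q C y = Some x"
  shows "PUD p q n C \<le> 1 - (1 / real (card C)) *
           (\<Sum>j\<le>n. real (WH C j) * (\<Sum>i\<le>n. (1 - q) ^ i * (1 - p) ^ (n - i) *
              (\<Sum>s\<in>Sset p q (h i j). (q / (1 - p)) powr s * lam p q n i j s)))"
proof -
  define F where "F j = (\<Sum>i\<le>n. (1 - q) ^ i * (1 - p) ^ (n - i) *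
              (\<Sum>s\<in>Sset p q (h i j). (q / (1 - p)) powr s * lam p q n i j s))" for j
  have fin: "finite C" using C finite_F2n finite_subset by blast
  have len: "length x = n" if "x \<in> C" for x using that C by (auto simp: F2n_def)
  have "(\<Sum>y\<in>{y \<in> F2n n. MLdec p q C y \<noteq> Some x}. Pn p q y x) \<le> 1 - F (wtH x)" if "x \<in> C" for x
    using sum_Pn_not_decoded_le[OF pq len[OF that], where h = "\<lambda>i. h i (wtH x)", OF dec[OF that]]
      sum_Pn_disc_less[OF pq len[OF that], of "\<lambda>i. h i (wtH x)"]
    by (simp add: F_def)
  then have "PUD p q n C \<le> (1 / real (card C)) * (\<Sum>x\<in>C. 1 - F (wtH x))"
    unfolding PUD_def by (intro mult_left_mono sum_mono) auto
  also have "\<dots> = 1 - (1 / real (card C)) * (\<Sum>x\<in>C. F (wtH x))"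
    using fin C(2) by (simp add: sum_subtractf field_simps)
  also have "(\<Sum>x\<in>C. F (wtH x)) = (\<Sum>j\<le>n. real (WH C j) * F j)"
    using C fin
    by (subst sum.group[symmetric, where g = wtH and T = "{..n}"])
       (auto simp: WH_def wtH_le intro!: sum.cong)
  finally show ?thesis unfolding F_def .
qed

lemma
  assumes "finite C" "x \<in> C" "x' \<in> C" "x \<noteq> x'"
  shows code_disc_le: "code_disc p q C \<le> disc p q x x'"
    and code_sdisc_le: "code_sdisc p q C \<le> sdisc p q x x'"
proof -
  have "finite {f x x' | x x'. x \<in> C \<and> x' \<in> C \<and> x \<noteq> x'}" for f :: "_ \<Rightarrow> _ \<Rightarrow> real"
    by (rule finite_subset[where B = "(\<lambda>(x, x'). f x x') ` (C \<times> C)"]) (use assms(1) in auto)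
  then show "code_disc p q C \<le> disc p q x x'" "code_sdisc p q C \<le> sdisc p q x x'"
    unfolding code_disc_def code_sdisc_def using assms(2-4) by (blast intro: Min_le)+
qed

theorem mainTheorem9:
  fixes p q :: real and n :: nat and C :: "bool list set"
  assumes "n \<ge> 2" and "0 < p" and "p \<le> q" and "q < 1/2"
    and "C \<subseteq> F2n n" and "card C \<ge> 2"
  shows "(PUD p q n C \<le> 1 - (1 / real (card C)) *
           (\<Sum>j\<le>n. real (WH C j) * (\<Sum>i\<le>n. (1 - q) ^ i * (1 - p) ^ (n - i) *
              (\<Sum>s\<in>Sset p q ((code_disc p q C + (gam p q - 1) * (real i - real j)) / 2).
                  (q / (1 - p)) powr s * lam p q n i j s)))) \<and>
         (PUD p q n C \<le> 1 - (1 / real (card C)) *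
           (\<Sum>j\<le>n. real (WH C j) * (\<Sum>i\<le>n. (1 - q) ^ i * (1 - p) ^ (n - i) *
              (\<Sum>s\<in>Sset p q ((code_sdisc p q C + real i * (gam p q - 1)) / 2).
                  (q / (1 - p)) powr s * lam p q n i j s))))"
proof -
  note pq = assms(2-4)
  have fin: "finite C" using assms(5) finite_F2n finite_subset by blast
  have len: "length x = n" if "x \<in> C" for x using that assms(5) by (auto simp: F2n_def)
  have decoded: "MLdec p q C y = Some x"
    if "x \<in> C" and y: "y \<in> F2n n" and close: "\<And>x'. x' \<in> C \<Longrightarrow> x' \<noteq> x \<Longrightarrow>
         2 * disc p q y x < disc p q x x' + (gam p q - 1) * (real (wtH y) - real (wtH x))" for x y
    using MLdec_eq_Some_if_disc_less[OF pq assms(5) that(1,2)]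
      disc_less_if_twice_disc_less[OF gam_ge_1[OF pq] _ _ close] y len that(1)
    by (simp add: F2n_def)
  have "C \<noteq> {}" using assms(6) by auto
  note bound = PUD_le_of_decoding_radius[OF pq assms(5) this]
  show ?thesis
  proof (intro conjI bound decoded)
    fix x x' y
    assume "x \<in> C" "x' \<in> C" "x' \<noteq> x"
    then have disc_C: "code_disc p q C \<le> disc p q x x'"
      and sdisc_C: "code_sdisc p q C + real (wtH y) * (gam p q - 1) \<le>
                    disc p q x x' + (gam p q - 1) * (real (wtH y) - real (wtH x))"
      using code_disc_le[OF fin] code_sdisc_le[OF fin] by (auto simp: sdisc_def algebra_simps)
    show "disc p q y x < (code_disc p q C + (gam p q - 1) * (real (wtH y) - real (wtH x))) / 2
          \<Longrightarrow> 2 * disc p q y x < disc p q x x' + (gam p q - 1) * (real (wtH y) - real (wtH x))"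
      using disc_C by (auto simp: field_simps)
    show "disc p q y x < (code_sdisc p q C + real (wtH y) * (gam p q - 1)) / 2
          \<Longrightarrow> 2 * disc p q y x < disc p q x x' + (gam p q - 1) * (real (wtH y) - real (wtH x))"
      using sdisc_C by (auto simp: field_simps)
  qed
qed

end
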